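(* LexiPS is not sd-weakly-strategyproof if agents may misreport their importance orders: there is a multi-type resource allocation problem with $n=2$ agents and $p=3$ types $F,B,T$, with $D_F=\{1_F,2_F\}$, $D_B=\{1_B,2_B\}$, $D_T=\{1_T,2_T\}$, where both agents have lexicographic preferences with $1_i\rhd^i_j 2_i$ for all types $i$ and both agents $j$, agent 1 has importance order $F\rhd_1 B\rhd_1 T$ and agent 2 has importance order $T\rhd_2 F\rhd_2 B$, such that if agent 2 reports instead the lexicographic preference with the same per-type orders and importance order $F\rhd B\rhd T$ replaced by $F\rhd T\rhd B$, then agent 2's resulting LexiPS allocation weakly stochastically dominates her truthful LexiPS allocation w.r.t. her true preference and differs from it.
   Context: Setting: $N=\{1,\dots,n\}$ agents; $M=D_1\cup\dots\cup D_p$ items with pairwise disjoint types, $|D_i|=n$, unit supply; bundles $\mathcal D=D_1\times\dots\times D_p$, $x_i$ the type-$i$ component. Lexicographic preference: agent $j$ has an importance order $\rhd_j$ over types and orders $\rhd^i_j$ on each $D_i$; $x\succ_j y$ iff there is a type $i$ with $x_i\rhd^i_j y_i$ and $x_{i'}=y_{i'}$ for all $i'\rhd_j i$. $U(\succ,x)=\{y:y\succ x\}\cup\{x\}$; $p$ weakly stochastically dominates $q$ w.r.t. $\succ$ if $\sum_{y\in U(\succ,x)}p_y\ge\sum_{y\in U(\succ,x)}q_y$ for all $x$. LexiPS: remaining supplies start at $1$ and carry across phases. In phase $k=1,\dots,p$ (unit duration each), each agent $j$ eats at rate $1$ her $\rhd^i_j$-most-preferred item with positive remaining supply among items of her $k$-th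 most important type $i$. With $s^i_{j,o}$ the amount of $o\in D_i$ eaten by $j$, the output is $p_{j,x}=\prod_i s^i_{j,x_i}$. *)

theory Defs
  imports Complex_Main
begin

text \<open>
Agents are 0..<n, types are 0..<p, and the items of type i are
encoded as 0..<n (item itm of type i stands for the itm-th element of D_i).
A lexicographic preference of agent j is given by
  imp j       : list of the p types, most important first (importance order),
  ord j i     : list of the n items of type i, most preferred first.
\<close>

definition better_in :: "nat list \<Rightarrow> nat \<Rightarrow> nat \<Rightarrow> bool" where
  "better_in L a b \<longleftrightarrow> (\<exists>u v. u < v \<and> v < length L \<and> L ! u = a \<and> L ! v = b)"

definition bundles :: "nat \<Rightarrow> nat \<Rightarrow> nat list set" where
  "bundles n p = {x. length x = p \<and> (\<forall>i<p. x ! i < n)}"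

definition lex_pref :: "(nat \<Rightarrow> nat list) \<Rightarrow> (nat \<Rightarrow> nat \<Rightarrow> nat list) \<Rightarrow> nat
    \<Rightarrow> nat list \<Rightarrow> nat list \<Rightarrow> bool" where
  "lex_pref imp ord j x y \<longleftrightarrow>
     (\<exists>k < length (imp j). better_in (ord j (imp j ! k)) (x ! (imp j ! k)) (y ! (imp j ! k))
        \<and> (\<forall>k' < k. x ! (imp j ! k') = y ! (imp j ! k')))"

definition upper :: "(nat \<Rightarrow> nat list) \<Rightarrow> (nat \<Rightarrow> nat \<Rightarrow> nat list) \<Rightarrow> nat
    \<Rightarrow> nat list set \<Rightarrow> nat list \<Rightarrow> nat list set" where
  "upper imp ord j B x = {y \<in> B. lex_pref imp ord j y x} \<union> {x}"

definition sd_weak_dom :: "(nat \<Rightarrow> nat list) \<Rightarrow> (nat \<Rightarrow> nat \<Rightarrow> nat list) \<Rightarrow> nat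
    \<Rightarrow> nat list set \<Rightarrow> (nat list \<Rightarrow> real) \<Rightarrow> (nat list \<Rightarrow> real) \<Rightarrow> bool" where
  "sd_weak_dom imp ord j B P Q \<longleftrightarrow>
     (\<forall>x\<in>B. (\<Sum>y\<in>upper imp ord j B x. P y) \<ge> (\<Sum>y\<in>upper imp ord j B x. Q y))"

type_synonym supplyT = "nat \<Rightarrow> nat \<Rightarrow> real"          (* type, item *)
type_synonym eatenT = "nat \<Rightarrow> nat \<Rightarrow> nat \<Rightarrow> real"     (* agent, type, item *)
type_synonym stateT = "supplyT \<times> eatenT \<times> real"       (* remaining time in phase *)

definition tgt :: "(nat \<Rightarrow> nat list) \<Rightarrow> (nat \<Rightarrow> nat \<Rightarrow> nat list) \<Rightarrow> nat \<Rightarrow> supplyT \<Rightarrow> nat \<Rightarrow> nat option" where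
  "tgt imp ord k s j = find (\<lambda>itm. s (imp j ! k) itm > 0) (ord j (imp j ! k))"

definition eats :: "(nat \<Rightarrow> nat list) \<Rightarrow> (nat \<Rightarrow> nat \<Rightarrow> nat list) \<Rightarrow> nat \<Rightarrow> supplyT
    \<Rightarrow> nat \<Rightarrow> nat \<Rightarrow> nat \<Rightarrow> bool" where
  "eats imp ord k s j i itm \<longleftrightarrow> imp j ! k = i \<and> tgt imp ord k s j = Some itm"

definition cnt :: "nat \<Rightarrow> (nat \<Rightarrow> nat list) \<Rightarrow> (nat \<Rightarrow> nat \<Rightarrow> nat list) \<Rightarrow> nat \<Rightarrow> supplyT
    \<Rightarrow> nat \<Rightarrow> nat \<Rightarrow> real" where
  "cnt n imp ord k s i itm = real (card {j. j < n \<and> eats imp ord k s j i itm})"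

text \<open>Length of the next interval: until the phase ends or some eatenT item runs out.\<close>
definition delta :: "nat \<Rightarrow> (nat \<Rightarrow> nat list) \<Rightarrow> (nat \<Rightarrow> nat \<Rightarrow> nat list) \<Rightarrow> nat \<Rightarrow> supplyT
    \<Rightarrow> real \<Rightarrow> real" where
  "delta n imp ord k s t =
     Min (insert t {s (imp j ! k) itm / cnt n imp ord k s (imp j ! k) itm | j itm.
                      j < n \<and> tgt imp ord k s j = Some itm})"

definition ps_step :: "nat \<Rightarrow> (nat \<Rightarrow> nat list) \<Rightarrow> (nat \<Rightarrow> nat \<Rightarrow> nat list) \<Rightarrow> nat \<Rightarrow> stateT \<Rightarrow> stateT" where
  "ps_step n imp ord k st = (case st of (s, e, t) \<Rightarrow>
     let d = delta n imp ord k s t in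
     (\<lambda>i itm. s i itm - d * cnt n imp ord k s i itm,
      \<lambda>j i itm. e j i itm + (if j < n \<and> eats imp ord k s j i itm then d else 0),
      t - d))"

fun ps_phase :: "nat \<Rightarrow> (nat \<Rightarrow> nat list) \<Rightarrow> (nat \<Rightarrow> nat \<Rightarrow> nat list) \<Rightarrow> nat \<Rightarrow> nat \<Rightarrow> stateT \<Rightarrow> stateT" where
  "ps_phase n imp ord k 0 st = st"
| "ps_phase n imp ord k (Suc f) st =
     (if snd (snd st) \<le> 0 then st else ps_phase n imp ord k f (ps_step n imp ord k st))"

text \<open>Run phases 0..<m; supplies carry across phases; each phase has unit duration.
n*p+1 events per phase suffice (each event before the last exhausts an item).\<close>
fun ps_run :: "nat \<Rightarrow> nat \<Rightarrow> (nat \<Rightarrow> nat list) \<Rightarrow> (nat \<Rightarrow> nat \<Rightarrow> nat list) \<Rightarrow> nat \<Rightarrow> supplyT \<times> eatenT" where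
  "ps_run n p imp ord 0 = (\<lambda>i itm. 1, \<lambda>j i itm. 0)"
| "ps_run n p imp ord (Suc k) =
     (case ps_run n p imp ord k of (s, e) \<Rightarrow>
        (case ps_phase n imp ord k (n * p + 1) (s, e, 1) of (s', e', _) \<Rightarrow> (s', e')))"

definition lexips :: "nat \<Rightarrow> nat \<Rightarrow> (nat \<Rightarrow> nat list) \<Rightarrow> (nat \<Rightarrow> nat \<Rightarrow> nat list) \<Rightarrow> nat \<Rightarrow> nat list \<Rightarrow> real" where
  "lexips n p imp ord j x = (\<Prod>i<p. snd (ps_run n p imp ord p) j i (x ! i))"

end

theory Submission
  imports Defs
begin

text \<open>
Under the truthful report, agent 2 takes 1_T in the first phase, so in the later phases
she only finds the leftovers 2_F and 2_B and ends with the bundle (2_F, 2_B, 1_T) for sure.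
Reporting F before T makes her compete with agent 1 for 1_F in the first phase: both
get half of 1_F and half of 2_F; 1_T is still free in the second phase and 2_B is what
is left in the third.  So half of her mass moves from (2_F, 2_B, 1_T) to (1_F, 2_B, 1_T),
which she truly prefers; by transitivity of lexicographic preferences every upper set
containing the former bundle also contains the latter, hence the weak sd-dominance.
\<close>

lemma better_in_trans:
  assumes "distinct L" "better_in L a b" "better_in L b c"
  shows "better_in L a c"
proof -
  obtain u v where uv: "u < v" "v < length L" "L ! u = a" "L ! v = b"
    using assms(2) by (auto simp: better_in_def)
  obtain v' w where vw: "v' < w" "w < length L" "L ! v' = b" "L ! w = c"
    using assms(3) by (auto simp: better_in_def)
  have "v' = v"
    using nth_eq_iff_index_eq[OF assms(1), of v' v] uv vw by simp
  with uv vw show ?thesis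
    unfolding better_in_def by (intro exI[of _ u] exI[of _ w]) simp
qed

lemma lex_pref_trans:
  assumes "\<And>i. distinct (ord j i)"
    and "lex_pref imp ord j x y" "lex_pref imp ord j y z"
  shows "lex_pref imp ord j x z"
proof -
  obtain k where k: "k < length (imp j)" "better_in (ord j (imp j ! k)) (x ! (imp j ! k)) (y ! (imp j ! k))"
    "\<forall>k'<k. x ! (imp j ! k') = y ! (imp j ! k')"
    using assms(2) by (auto simp: lex_pref_def)
  obtain l where l: "l < length (imp j)" "better_in (ord j (imp j ! l)) (y ! (imp j ! l)) (z ! (imp j ! l))"
    "\<forall>k'<l. y ! (imp j ! k') = z ! (imp j ! k')"
    using assms(3) by (auto simp: lex_pref_def)
  consider "k < l" | "k = l" | "l < k"
    by linarith
  then show ?thesis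
  proof cases
    case 1
    with k l show ?thesis
      unfolding lex_pref_def by (intro exI[of _ k]) auto
  next
    case 2
    with k l assms(1) show ?thesis
      unfolding lex_pref_def by (intro exI[of _ k]) (auto intro: better_in_trans)
  next
    case 3
    with k l show ?thesis
      unfolding lex_pref_def by (intro exI[of _ l]) auto
  qed
qed

lemma upper_closed:
  assumes "\<And>i. distinct (ord j i)"
    and "lex_pref imp ord j a b" "a \<in> B" "b \<in> upper imp ord j B x"
  shows "a \<in> upper imp ord j B x"
  using assms lex_pref_trans[OF assms(1) assms(2)] by (auto simp: upper_def)

lemma sum_upper_point_masses:
  assumes "finite B" "\<And>y. y \<in> B \<Longrightarrow> P y = (if y = a then u else 0) + (if y = b then v else 0)"
    and "x \<in> B"
  shows "(\<Sum>y\<in>upper imp ord j B x. P y) =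
    (if a \<in> upper imp ord j B x then u else 0) + (if b \<in> upper imp ord j B x then v else 0)"
proof -
  have U: "upper imp ord j B x \<subseteq> B" "finite (upper imp ord j B x)"
    using assms(1,3) by (auto simp: upper_def)
  have "(\<Sum>y\<in>upper imp ord j B x. P y) =
      (\<Sum>y\<in>upper imp ord j B x. (if y = a then u else 0) + (if y = b then v else 0))"
    using U(1) assms(2) by (intro sum.cong) auto
  also have "\<dots> = (if a \<in> upper imp ord j B x then u else 0) + (if b \<in> upper imp ord j B x then v else 0)"
    using U(2) by (simp add: sum.distrib sum.delta')
  finally show ?thesis .
qed

lemma sd_weak_dom_move_mass:
  assumes "finite B" "a \<in> B" "\<And>i. distinct (ord j i)" "lex_pref imp ord j a b"
    and "0 \<le> w"
    and P: "\<And>y. y \<in> B \<Longrightarrow> P y = (if y = a then w else 0) + (if y = b then 1 - w else 0)"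
    and Q: "\<And>y. y \<in> B \<Longrightarrow> Q y = (if y = b then 1 else 0)"
  shows "sd_weak_dom imp ord j B P Q"
  unfolding sd_weak_dom_def
proof
  fix x assume x: "x \<in> B"
  let ?U = "upper imp ord j B x"
  have "(\<Sum>y\<in>?U. P y) = (if a \<in> ?U then w else 0) + (if b \<in> ?U then 1 - w else 0)"
    using sum_upper_point_masses[OF assms(1) P x] .
  moreover have "(\<Sum>y\<in>?U. Q y) = (if b \<in> ?U then 1 else 0)"
    using sum_upper_point_masses[OF assms(1) _ x, of Q b 0 b 1] Q by simp
  moreover have "b \<in> ?U \<Longrightarrow> a \<in> ?U"
    using upper_closed[OF assms(3,4,2)] .
  ultimately show "(\<Sum>y\<in>?U. Q y) \<le> (\<Sum>y\<in>?U. P y)"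
    using assms(5) by auto
qed

lemma card_less_2_Collect:
  "card {j. j < (2::nat) \<and> P j} = (if P 0 then 1 else 0) + (if P 1 then 1 else 0)"
proof -
  have "{j. j < (2::nat) \<and> P j} = (if P 0 then {0} else {}) \<union> (if P 1 then {1} else {})"
    unfolding less_2_cases_iff by (cases "P 0"; cases "P 1") fastforce+
  then show ?thesis
    by auto
qed

lemma setcompr_less_2_Some:
  "{f j itm | j itm. j < (2::nat) \<and> g j = Some itm} =
     (case g 0 of None \<Rightarrow> {} | Some a \<Rightarrow> {f 0 a}) \<union> (case g 1 of None \<Rightarrow> {} | Some a \<Rightarrow> {f 1 a})"
  unfolding less_2_cases_iff by (cases "g 0"; cases "g 1") fastforce+

lemma fun_eq_on_3x2I:
  fixes f g :: "nat \<Rightarrow> nat \<Rightarrow> 'a"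
  assumes "\<And>i itm. 3 \<le> i \<Longrightarrow> f i itm = g i itm" "\<And>i itm. 2 \<le> itm \<Longrightarrow> f i itm = g i itm"
    and "f 0 0 = g 0 0" "f 0 1 = g 0 1" "f 1 0 = g 1 0" "f 1 1 = g 1 1" "f 2 0 = g 2 0" "f 2 1 = g 2 1"
  shows "f = g"
proof (intro ext)
  fix i itm :: nat
  show "f i itm = g i itm"
  proof (cases "3 \<le> i \<or> 2 \<le> itm")
    case True
    then show ?thesis using assms(1,2) by auto
  next
    case False
    then have "i = 0 \<or> i = 1 \<or> i = 2" "itm = 0 \<or> itm = 1" by auto
    then show ?thesis using assms(3-8) by auto
  qed
qed

lemma fun_eq_on_2I:
  fixes f g :: "nat \<Rightarrow> 'a"
  assumes "\<And>j. 2 \<le> j \<Longrightarrow> f j = g j" "f 0 = g 0" "f 1 = g 1"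
  shows "f = g"
proof
  fix j :: nat
  show "f j = g j"
    using assms by (cases "2 \<le> j") (auto simp: not_le less_2_cases_iff)
qed

lemma bundles_2_3:
  "bundles 2 3 = {[0,0,0], [0,0,1], [0,1,0], [0,1,1], [1,0,0], [1,0,1], [1,1,0], [1,1,1]}"
proof (intro set_eqI iffI)
  fix x
  assume "x \<in> bundles 2 3"
  then have l: "length x = 3" and bnd: "\<forall>i<3. x ! i < 2"
    by (auto simp: bundles_def)
  from l obtain a b c where x: "x = [a, b, c]"
    by (metis length_0_conv length_Suc_conv numeral_3_eq_3)
  have "a < 2" "b < 2" "c < 2"
    using bnd x by (auto dest: spec[of _ 0] spec[of _ 1] spec[of _ 2])
  then show "x \<in> {[0,0,0], [0,0,1], [0,1,0], [0,1,1], [1,0,0], [1,0,1], [1,1,0], [1,1,1]}"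
    using x by (auto simp: less_2_cases_iff)
qed (auto simp: bundles_def less_Suc_eq eval_nat_numeral)

definition truthful :: "nat \<Rightarrow> nat list" where
  "truthful = (\<lambda>j. if j = 0 then [0, 1, 2] else [2, 0, 1])"

definition misreport :: "nat \<Rightarrow> nat list" where
  "misreport = truthful(1 := [0, 2, 1])"

definition item_order :: "nat \<Rightarrow> nat \<Rightarrow> nat list" where
  "item_order = (\<lambda>j i. [0, 1])"

lemma profile_simps [simp]:
  "truthful 0 = [0, 1, 2]" "truthful (Suc 0) = [2, 0, 1]"
  "misreport 0 = [0, 1, 2]" "misreport (Suc 0) = [0, 2, 1]"
  "item_order j i = [0, 1]"
  by (simp_all add: truthful_def misreport_def item_order_def)

text \<open>
A state of the simulation as a table: the lists enumerate the entries of the items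
1_F, 2_F, 1_B, 2_B, 1_T, 2_T in this order.  Outside the 3 x 2 grid of real items the
simulation never touches the supply, which therefore stays 1.
\<close>
definition supply_tbl :: "real list \<Rightarrow> supplyT" where
  "supply_tbl xs i itm = (if i < 3 \<and> itm < 2 then xs ! (2 * i + itm) else 1)"

definition eaten_tbl :: "real list \<Rightarrow> real list \<Rightarrow> eatenT" where
  "eaten_tbl as bs j i itm =
     (if i < 3 \<and> itm < 2 then (if j = 0 then as ! (2 * i + itm) else if j = 1 then bs ! (2 * i + itm) else 0)
      else 0)"

lemmas eating_simps = cnt_def card_less_2_Collect eats_def tgt_def supply_tbl_def eaten_tbl_def

lemma ps_run_0_tbl:
  "ps_run n p imp ord 0 = (supply_tbl [1,1,1,1,1,1], eaten_tbl [0,0,0,0,0,0] [0,0,0,0,0,0])"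
  by (simp, intro conjI fun_eq_on_3x2I fun_eq_on_2I) (simp_all add: supply_tbl_def eaten_tbl_def)

lemma ps_run_SucI:
  assumes "ps_run n p imp ord k = (s, e)" "ps_phase n imp ord k (Suc (n * p)) (s, e, 1) = (s', e', t)"
  shows "ps_run n p imp ord (Suc k) = (s', e')"
  using assms by simp

lemma ps_phase_last_event:
  assumes "0 < t" "delta n imp ord k s t = t"
  shows "ps_phase n imp ord k (Suc f) (s, e, t) = ps_step n imp ord k (s, e, t)"
proof -
  have "snd (snd (ps_step n imp ord k (s, e, t))) = 0"
    using assms(2) by (simp add: ps_step_def Let_def)
  then have "ps_phase n imp ord k f (ps_step n imp ord k (s, e, t)) = ps_step n imp ord k (s, e, t)"
    by (cases f) auto
  then show ?thesis
    using assms(1) by simp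
qed

lemma truthful_phase_0:
  "ps_phase 2 truthful item_order 0 (Suc f) (supply_tbl [1,1,1,1,1,1], eaten_tbl [0,0,0,0,0,0] [0,0,0,0,0,0], 1)
     = (supply_tbl [0,1,1,1,0,1], eaten_tbl [1,0,0,0,0,0] [0,0,0,0,1,0], 0)"
proof -
  have d: "delta 2 truthful item_order 0 (supply_tbl [1,1,1,1,1,1]) 1 = 1"
    by (simp add: delta_def setcompr_less_2_Some eating_simps)
  show ?thesis
    unfolding ps_phase_last_event[OF zero_less_one d] ps_step_def Let_def d
    by (simp, intro conjI fun_eq_on_3x2I fun_eq_on_2I) (simp_all add: eating_simps d)
qed

lemma truthful_phase_1:
  "ps_phase 2 truthful item_order (Suc 0) (Suc f) (supply_tbl [0,1,1,1,0,1], eaten_tbl [1,0,0,0,0,0] [0,0,0,0,1,0], 1)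
     = (supply_tbl [0,0,0,1,0,1], eaten_tbl [1,0,1,0,0,0] [0,1,0,0,1,0], 0)"
proof -
  have d: "delta 2 truthful item_order (Suc 0) (supply_tbl [0,1,1,1,0,1]) 1 = 1"
    by (simp add: delta_def setcompr_less_2_Some eating_simps)
  show ?thesis
    unfolding ps_phase_last_event[OF zero_less_one d] ps_step_def Let_def d
    by (simp, intro conjI fun_eq_on_3x2I fun_eq_on_2I) (simp_all add: eating_simps d)
qed

lemma truthful_phase_2:
  "ps_phase 2 truthful item_order (Suc (Suc 0)) (Suc f) (supply_tbl [0,0,0,1,0,1], eaten_tbl [1,0,1,0,0,0] [0,1,0,0,1,0], 1)
     = (supply_tbl [0,0,0,0,0,0], eaten_tbl [1,0,1,0,0,1] [0,1,0,1,1,0], 0)"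
proof -
  have d: "delta 2 truthful item_order (Suc (Suc 0)) (supply_tbl [0,0,0,1,0,1]) 1 = 1"
    by (simp add: delta_def setcompr_less_2_Some eating_simps)
  show ?thesis
    unfolding ps_phase_last_event[OF zero_less_one d] ps_step_def Let_def d
    by (simp, intro conjI fun_eq_on_3x2I fun_eq_on_2I) (simp_all add: eating_simps d)
qed

lemma misreport_phase_0:
  assumes "0 < f"
  shows "ps_phase 2 misreport item_order 0 (Suc f) (supply_tbl [1,1,1,1,1,1], eaten_tbl [0,0,0,0,0,0] [0,0,0,0,0,0], 1)
     = (supply_tbl [0,0,1,1,1,1], eaten_tbl [1/2,1/2,0,0,0,0] [1/2,1/2,0,0,0,0], 0)"
proof -
  have d1: "delta 2 misreport item_order 0 (supply_tbl [1,1,1,1,1,1]) 1 = 1/2"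
    by (simp add: delta_def setcompr_less_2_Some eating_simps)
  have d2: "delta 2 misreport item_order 0 (supply_tbl [0,1,1,1,1,1]) (1/2) = 1/2"
    by (simp add: delta_def setcompr_less_2_Some eating_simps)
  have step: "ps_step 2 misreport item_order 0 (supply_tbl [1,1,1,1,1,1], eaten_tbl [0,0,0,0,0,0] [0,0,0,0,0,0], 1)
      = (supply_tbl [0,1,1,1,1,1], eaten_tbl [1/2,0,0,0,0,0] [1/2,0,0,0,0,0], 1/2)"
    unfolding ps_step_def Let_def d1
    by (simp, intro conjI fun_eq_on_3x2I fun_eq_on_2I) (simp_all add: eating_simps d1)
  obtain g where f: "f = Suc g"
    using assms by (cases f) auto
  have "ps_phase 2 misreport item_order 0 (Suc f) (supply_tbl [1,1,1,1,1,1], eaten_tbl [0,0,0,0,0,0] [0,0,0,0,0,0], 1)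
      = ps_phase 2 misreport item_order 0 f (supply_tbl [0,1,1,1,1,1], eaten_tbl [1/2,0,0,0,0,0] [1/2,0,0,0,0,0], 1/2)"
    using step by simp
  also have "\<dots> = ps_step 2 misreport item_order 0 (supply_tbl [0,1,1,1,1,1], eaten_tbl [1/2,0,0,0,0,0] [1/2,0,0,0,0,0], 1/2)"
    unfolding f by (rule ps_phase_last_event) (simp_all add: d2)
  also have "\<dots> = (supply_tbl [0,0,1,1,1,1], eaten_tbl [1/2,1/2,0,0,0,0] [1/2,1/2,0,0,0,0], 0)"
    unfolding ps_step_def Let_def d2
    by (simp, intro conjI fun_eq_on_3x2I fun_eq_on_2I) (simp_all add: eating_simps d2)
  finally show ?thesis .
qed

lemma misreport_phase_1:
  "ps_phase 2 misreport item_order (Suc 0) (Suc f) (supply_tbl [0,0,1,1,1,1], eaten_tbl [1/2,1/2,0,0,0,0] [1/2,1/2,0,0,0,0], 1)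
     = (supply_tbl [0,0,0,1,0,1], eaten_tbl [1/2,1/2,1,0,0,0] [1/2,1/2,0,0,1,0], 0)"
proof -
  have d: "delta 2 misreport item_order (Suc 0) (supply_tbl [0,0,1,1,1,1]) 1 = 1"
    by (simp add: delta_def setcompr_less_2_Some eating_simps)
  show ?thesis
    unfolding ps_phase_last_event[OF zero_less_one d] ps_step_def Let_def d
    by (simp, intro conjI fun_eq_on_3x2I fun_eq_on_2I) (simp_all add: eating_simps d)
qed

lemma misreport_phase_2:
  "ps_phase 2 misreport item_order (Suc (Suc 0)) (Suc f) (supply_tbl [0,0,0,1,0,1], eaten_tbl [1/2,1/2,1,0,0,0] [1/2,1/2,0,0,1,0], 1)
     = (supply_tbl [0,0,0,0,0,0], eaten_tbl [1/2,1/2,1,0,0,1] [1/2,1/2,0,1,1,0], 0)"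
proof -
  have d: "delta 2 misreport item_order (Suc (Suc 0)) (supply_tbl [0,0,0,1,0,1]) 1 = 1"
    by (simp add: delta_def setcompr_less_2_Some eating_simps)
  show ?thesis
    unfolding ps_phase_last_event[OF zero_less_one d] ps_step_def Let_def d
    by (simp, intro conjI fun_eq_on_3x2I fun_eq_on_2I) (simp_all add: eating_simps d)
qed

lemma truthful_lexips:
  assumes "x \<in> bundles 2 3"
  shows "lexips 2 3 truthful item_order 1 x = (if x = [1,1,0] then 1 else 0)"
proof -
  have "ps_run 2 3 truthful item_order 3 =
      (supply_tbl [0,0,0,0,0,0], eaten_tbl [1,0,1,0,0,1] [0,1,0,1,1,0])"
    unfolding numeral_3_eq_3
    by (rule ps_run_SucI[OF ps_run_SucI[OF ps_run_SucI[OF ps_run_0_tbl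
          truthful_phase_0] truthful_phase_1] truthful_phase_2])
  then show ?thesis
    using assms unfolding lexips_def bundles_2_3 by (auto simp: eaten_tbl_def eval_nat_numeral)
qed

lemma misreport_lexips:
  assumes "x \<in> bundles 2 3"
  shows "lexips 2 3 misreport item_order 1 x =
    (if x = [0,1,0] then 1/2 else 0) + (if x = [1,1,0] then 1/2 else 0)"
proof -
  have "ps_run 2 3 misreport item_order 1 =
      (supply_tbl [0,0,1,1,1,1], eaten_tbl [1/2,1/2,0,0,0,0] [1/2,1/2,0,0,0,0])"
    unfolding One_nat_def by (rule ps_run_SucI[OF ps_run_0_tbl misreport_phase_0]) simp
  then have "ps_run 2 3 misreport item_order 3 =
      (supply_tbl [0,0,0,0,0,0], eaten_tbl [1/2,1/2,1,0,0,1] [1/2,1/2,0,1,1,0])"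
    unfolding numeral_3_eq_3 One_nat_def
    by (rule ps_run_SucI[OF ps_run_SucI[OF _ misreport_phase_1] misreport_phase_2])
  then show ?thesis
    using assms unfolding lexips_def bundles_2_3 by (auto simp: eaten_tbl_def eval_nat_numeral)
qed

lemma lex_pref_1F_over_2F: "lex_pref truthful item_order 1 [0,1,0] [1,1,0]"
  unfolding lex_pref_def better_in_def
  by (intro exI[of _ 1] conjI exI[of _ 0]) simp_all

theorem mainTheorem5:
  fixes imp imp' :: "nat \<Rightarrow> nat list" and ord :: "nat \<Rightarrow> nat \<Rightarrow> nat list"
  assumes "ord = (\<lambda>j i. [0, 1])"
    and "imp = (\<lambda>j. if j = 0 then [0, 1, 2] else [2, 0, 1])"
    and "imp' = imp(1 := [0, 2, 1])"
  shows "sd_weak_dom imp ord 1 (bundles 2 3) (lexips 2 3 imp' ord 1) (lexips 2 3 imp ord 1)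
       \<and> (\<exists>x \<in> bundles 2 3. lexips 2 3 imp' ord 1 x \<noteq> lexips 2 3 imp ord 1 x)"
proof -
  have profile: "ord = item_order" "imp = truthful" "imp' = misreport"
    using assms by (simp_all add: item_order_def truthful_def misreport_def)
  have in_bundles: "[0,1,0] \<in> bundles 2 3" and "finite (bundles 2 3)"
    by (simp_all add: bundles_2_3)
  have "sd_weak_dom truthful item_order 1 (bundles 2 3)
      (lexips 2 3 misreport item_order 1) (lexips 2 3 truthful item_order 1)"
    using truthful_lexips misreport_lexips
    by (intro sd_weak_dom_move_mass[OF \<open>finite (bundles 2 3)\<close> in_bundles _ lex_pref_1F_over_2F, of "1/2"]) auto
  moreover have "lexips 2 3 misreport item_order 1 [0,1,0] \<noteq> lexips 2 3 truthful item_order 1 [0,1,0]"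
    using truthful_lexips[OF in_bundles] misreport_lexips[OF in_bundles] by simp
  ultimately show ?thesis
    unfolding profile using in_bundles by blast
qed

end
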